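(* Let $\varphi$ and $\psi$ be metric formulas without implication (and hence without negation). Then $\varphi\equiv\psi$ in MTL iff $\varphi\equiv\psi$ in MHT.
   Context: Metric formulas over $\mathcal{A}$: $\varphi ::= p \mid \bot \mid \varphi_1\otimes\varphi_2 \mid \bullet_I\varphi \mid \varphi_1\,\mathsf{S}_I\,\varphi_2 \mid \varphi_1\,\mathsf{T}_I\,\varphi_2 \mid \bigcirc_I\varphi \mid \varphi_1\,\mathsf{U}_I\,\varphi_2 \mid \varphi_1\,\mathsf{R}_I\,\varphi_2$, $\otimes\in\{\to,\wedge,\vee\}$, $I=[m,n)$, $m\in\mathbb{N}$, $n\in\mathbb{N}\cup\{\omega\}$; derived operators include $\neg\varphi=\varphi\to\bot$, $\top=\neg\bot$, $\blacksquare_I\varphi=\bot\,\mathsf{T}_I\,\varphi$, eventually before $\top\,\mathsf{S}_I\,\varphi$, $\Box_I\varphi=\bot\,\mathsf{R}_I\,\varphi$, $\Diamond_I\varphi=\top\,\mathsf{U}_I\,\varphi$. Timed HT-trace $\mathbf{M}=(\langle\mathbf{H},\mathbf{T}\rangle,\tau)$ of length $\lambda\in\mathbb{N}\cup\{\omega\}$: $H_i\subseteq T_i\subseteq\mathcal{A}$, $\tau:[0,\lambda)\to\mathbb{N}$, $\tau(0)=0$, $\tau(i)\le\tau(i+1)$; total if $\mathbf{H}=\mathbf{T}$. Satisfaction at $k$: $\bot$ never; $p$ iff $p\in H_k$; $\wedge,\vee$ usual; $\varphi\to\psi$ iff for both $\mathbf{M}'=\mathbf{M}$ and $\mathbf{M}'=(\langle\mathbf{T},\mathbf{T}\rangle,\tau)$,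 $\mathbf{M}',k\not\models\varphi$ or $\mathbf{M}',k\models\psi$; $\bullet_I\varphi$: $k>0$, $\varphi$ at $k-1$, $\tau(k)-\tau(k-1)\in I$; $\varphi\,\mathsf{S}_I\,\psi$: some $j\in[0,k]$ with $\tau(k)-\tau(j)\in I$, $\psi$ at $j$, $\varphi$ at all $i\in(j,k]$; $\varphi\,\mathsf{T}_I\,\psi$: for all such $j$, $\psi$ at $j$ or $\varphi$ at some $i\in(j,k]$; $\bigcirc_I\varphi$: $k+1<\lambda$, $\varphi$ at $k+1$, $\tau(k+1)-\tau(k)\in I$; $\varphi\,\mathsf{U}_I\,\psi$: some $j\in[k,\lambda)$ with $\tau(j)-\tau(k)\in I$, $\psi$ at $j$, $\varphi$ at all $i\in[k,j)$; $\varphi\,\mathsf{R}_I\,\psi$: for all such $j$, $\psi$ at $j$ or $\varphi$ at some $i\in[k,j)$. Equivalence in MHT: $\mathbf{M},k\models\varphi\leftrightarrow\psi$ for all timed HT-traces and all $k$; MTL (metric temporal logic) is the restriction to total traces, so equivalence in MTL quantifies only over total traces. *)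

theory Defs
  imports Main "HOL-Library.Extended_Nat"
begin

type_synonym interval = "nat \<times> enat"

definition in_interval :: "nat \<Rightarrow> interval \<Rightarrow> bool" where
  "in_interval d I \<longleftrightarrow> fst I \<le> d \<and> enat d < snd I"

datatype 'a mform =
    Atom 'a
  | Bot
  | Impl "'a mform" "'a mform"
  | Conj "'a mform" "'a mform"
  | Disj "'a mform" "'a mform"
  | Prev interval "'a mform"
  | Since interval "'a mform" "'a mform"
  | Trigger interval "'a mform" "'a mform"
  | Next interval "'a mform"
  | Until interval "'a mform" "'a mform"
  | Release interval "'a mform" "'a mform"

definition Iff :: "'a mform \<Rightarrow> 'a mform \<Rightarrow> 'a mform" where
  "Iff \<phi> \<psi> = Conj (Impl \<phi> \<psi>) (Impl \<psi> \<phi>)"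

text \<open>Timed HT-trace (H,T,tau) of length lam: only positions in [0,lam) matter.\<close>
definition ht_trace :: "(nat \<Rightarrow> 'a set) \<Rightarrow> (nat \<Rightarrow> 'a set) \<Rightarrow> (nat \<Rightarrow> nat) \<Rightarrow> enat \<Rightarrow> bool" where
  "ht_trace H T \<tau> lam \<longleftrightarrow> 0 < lam \<and> \<tau> 0 = 0
     \<and> (\<forall>i. enat (Suc i) < lam \<longrightarrow> \<tau> i \<le> \<tau> (Suc i))
     \<and> (\<forall>i. enat i < lam \<longrightarrow> H i \<subseteq> T i)"

primrec sat :: "(nat \<Rightarrow> 'a set) \<Rightarrow> (nat \<Rightarrow> 'a set) \<Rightarrow> (nat \<Rightarrow> nat) \<Rightarrow> enat \<Rightarrow> nat \<Rightarrow> 'a mform \<Rightarrow> bool" where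
  "sat H T \<tau> lam k (Atom p) = (p \<in> H k)"
| "sat H T \<tau> lam k Bot = False"
| "sat H T \<tau> lam k (Impl \<phi> \<psi>) =
     ((\<not> sat H T \<tau> lam k \<phi> \<or> sat H T \<tau> lam k \<psi>) \<and>
      (\<not> sat T T \<tau> lam k \<phi> \<or> sat T T \<tau> lam k \<psi>))"
| "sat H T \<tau> lam k (Conj \<phi> \<psi>) = (sat H T \<tau> lam k \<phi> \<and> sat H T \<tau> lam k \<psi>)"
| "sat H T \<tau> lam k (Disj \<phi> \<psi>) = (sat H T \<tau> lam k \<phi> \<or> sat H T \<tau> lam k \<psi>)"
| "sat H T \<tau> lam k (Prev I \<phi>) =
     (0 < k \<and> sat H T \<tau> lam (k - 1) \<phi> \<and> in_interval (\<tau> k - \<tau> (k - 1)) I)"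
| "sat H T \<tau> lam k (Since I \<phi> \<psi>) =
     (\<exists>j\<le>k. in_interval (\<tau> k - \<tau> j) I \<and> sat H T \<tau> lam j \<psi> \<and>
        (\<forall>i. j < i \<and> i \<le> k \<longrightarrow> sat H T \<tau> lam i \<phi>))"
| "sat H T \<tau> lam k (Trigger I \<phi> \<psi>) =
     (\<forall>j\<le>k. in_interval (\<tau> k - \<tau> j) I \<longrightarrow> sat H T \<tau> lam j \<psi> \<or>
        (\<exists>i. j < i \<and> i \<le> k \<and> sat H T \<tau> lam i \<phi>))"
| "sat H T \<tau> lam k (Next I \<phi>) =
     (enat (k + 1) < lam \<and> sat H T \<tau> lam (k + 1) \<phi> \<and> in_interval (\<tau> (k + 1) - \<tau> k) I)"
| "sat H T \<tau> lam k (Until I \<phi> \<psi>) =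
     (\<exists>j. k \<le> j \<and> enat j < lam \<and> in_interval (\<tau> j - \<tau> k) I \<and> sat H T \<tau> lam j \<psi> \<and>
        (\<forall>i. k \<le> i \<and> i < j \<longrightarrow> sat H T \<tau> lam i \<phi>))"
| "sat H T \<tau> lam k (Release I \<phi> \<psi>) =
     (\<forall>j. k \<le> j \<and> enat j < lam \<and> in_interval (\<tau> j - \<tau> k) I \<longrightarrow> sat H T \<tau> lam j \<psi> \<or>
        (\<exists>i. k \<le> i \<and> i < j \<and> sat H T \<tau> lam i \<phi>))"

primrec impl_free :: "'a mform \<Rightarrow> bool" where
  "impl_free (Atom p) = True"
| "impl_free Bot = True"
| "impl_free (Impl \<phi> \<psi>) = False"
| "impl_free (Conj \<phi> \<psi>) = (impl_free \<phi> \<and> impl_free \<psi>)"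
| "impl_free (Disj \<phi> \<psi>) = (impl_free \<phi> \<and> impl_free \<psi>)"
| "impl_free (Prev I \<phi>) = impl_free \<phi>"
| "impl_free (Since I \<phi> \<psi>) = (impl_free \<phi> \<and> impl_free \<psi>)"
| "impl_free (Trigger I \<phi> \<psi>) = (impl_free \<phi> \<and> impl_free \<psi>)"
| "impl_free (Next I \<phi>) = impl_free \<phi>"
| "impl_free (Until I \<phi> \<psi>) = (impl_free \<phi> \<and> impl_free \<psi>)"
| "impl_free (Release I \<phi> \<psi>) = (impl_free \<phi> \<and> impl_free \<psi>)"

definition mht_equiv :: "'a mform \<Rightarrow> 'a mform \<Rightarrow> bool" where
  "mht_equiv \<phi> \<psi> \<longleftrightarrow> (\<forall>H T \<tau> lam k. ht_trace H T \<tau> lam \<and> enat k < lam \<longrightarrow> sat H T \<tau> lam k (Iff \<phi> \<psi>))"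

definition mtl_equiv :: "'a mform \<Rightarrow> 'a mform \<Rightarrow> bool" where
  "mtl_equiv \<phi> \<psi> \<longleftrightarrow> (\<forall>T \<tau> lam k. ht_trace T T \<tau> lam \<and> enat k < lam \<longrightarrow> sat T T \<tau> lam k (Iff \<phi> \<psi>))"

end

theory Submission
  imports Defs
begin

text \<open>Without implication, satisfaction never consults the there-component T, so at an HT-trace
  (H, T) an implication-free formula holds exactly when it holds at the total trace (H, H).
  The biconditional at (H, T) thus splits into the MTL biconditionals at (H, H) and (T, T).\<close>

lemma sat_impl_free_there_indep:
  "impl_free \<phi> \<Longrightarrow> sat H T \<tau> lam k \<phi> = sat H T' \<tau> lam k \<phi>"
  by (induction \<phi> arbitrary: k) auto

lemma sat_Iff:
  "sat H T \<tau> lam k (Iff \<phi> \<psi>) \<longleftrightarrow>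
     (sat H T \<tau> lam k \<phi> \<longleftrightarrow> sat H T \<tau> lam k \<psi>) \<and> (sat T T \<tau> lam k \<phi> \<longleftrightarrow> sat T T \<tau> lam k \<psi>)"
  by (auto simp: Iff_def)

lemma ht_trace_here_total: "ht_trace H T \<tau> lam \<Longrightarrow> ht_trace H H \<tau> lam"
  unfolding ht_trace_def by auto

lemma ht_trace_there_total: "ht_trace H T \<tau> lam \<Longrightarrow> ht_trace T T \<tau> lam"
  unfolding ht_trace_def by auto

lemma mtl_equivD:
  "mtl_equiv \<phi> \<psi> \<Longrightarrow> ht_trace T T \<tau> lam \<Longrightarrow> enat k < lam \<Longrightarrow>
     sat T T \<tau> lam k \<phi> \<longleftrightarrow> sat T T \<tau> lam k \<psi>"
  unfolding mtl_equiv_def by (auto simp: sat_Iff)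

lemma mht_equiv_imp_mtl_equiv: "mht_equiv \<phi> \<psi> \<Longrightarrow> mtl_equiv \<phi> \<psi>"
  unfolding mht_equiv_def mtl_equiv_def by blast

lemma mtl_equiv_imp_mht_equiv:
  assumes "impl_free \<phi>" and "impl_free \<psi>" and mtl: "mtl_equiv \<phi> \<psi>"
  shows "mht_equiv \<phi> \<psi>"
  unfolding mht_equiv_def
proof (intro allI impI)
  fix H T :: "nat \<Rightarrow> 'a set" and \<tau> lam k
  assume trace: "ht_trace H T \<tau> lam \<and> enat k < lam"
  have here: "sat H H \<tau> lam k \<phi> \<longleftrightarrow> sat H H \<tau> lam k \<psi>"
    using mtl_equivD[OF mtl ht_trace_here_total] trace by blast
  have there: "sat T T \<tau> lam k \<phi> \<longleftrightarrow> sat T T \<tau> lam k \<psi>"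
    using mtl_equivD[OF mtl ht_trace_there_total] trace by blast
  show "sat H T \<tau> lam k (Iff \<phi> \<psi>)"
    using here there sat_impl_free_there_indep[OF assms(1), of H T _ _ _ H]
      sat_impl_free_there_indep[OF assms(2), of H T _ _ _ H]
    by (simp add: sat_Iff)
qed

theorem proposition6:
  fixes \<phi> \<psi> :: "'a mform"
  assumes "impl_free \<phi>" and "impl_free \<psi>"
  shows "mtl_equiv \<phi> \<psi> \<longleftrightarrow> mht_equiv \<phi> \<psi>"
  using mtl_equiv_imp_mht_equiv[OF assms] mht_equiv_imp_mtl_equiv by blast

end
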